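(* For a topological space $X$ the following statements are equivalent: (a) $C(X)$ has the countable sup property; (b) $C_b(X)$ has the countable sup property; (c) $X$ satisfies CCC for cozero sets.
   Context: $C(X)$ is the vector lattice of all real-valued continuous functions on $X$ with the pointwise order, and $C_b(X)$ its sublattice of bounded functions. A vector lattice has the countable sup property if every nonempty subset possessing a supremum contains a countable subset with the same supremum. A subset $U\subseteq X$ is a cozero set if $U=\{x: f(x)\neq 0\}$ for some $f\in C(X)$; $X$ satisfies CCC for cozero sets if every collection of pairwise disjoint cozero sets is countable. *)

theory Defs
  imports "HOL-Analysis.Analysis"
begin

text \<open>Functions are represented
  extensionally (value 0 outside topspace X), so that the pointwise order of
  functions coincides with the pointwise order on X and is antisymmetric.\<close>
definition Cfun :: "'a topology \<Rightarrow> ('a \<Rightarrow> real) set" where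
  "Cfun X = {f. continuous_map X euclideanreal f \<and> (\<forall>x. x \<notin> topspace X \<longrightarrow> f x = 0)}"

definition Cbfun :: "'a topology \<Rightarrow> ('a \<Rightarrow> real) set" where
  "Cbfun X = {f \<in> Cfun X. \<exists>B. \<forall>x\<in>topspace X. \<bar>f x\<bar> \<le> B}"

definition is_sup_in :: "('a \<Rightarrow> real) set \<Rightarrow> ('a \<Rightarrow> real) set \<Rightarrow> ('a \<Rightarrow> real) \<Rightarrow> bool" where
  "is_sup_in L S s \<longleftrightarrow> s \<in> L \<and> (\<forall>f\<in>S. f \<le> s) \<and> (\<forall>u\<in>L. (\<forall>f\<in>S. f \<le> u) \<longrightarrow> s \<le> u)"

definition countable_sup_property :: "('a \<Rightarrow> real) set \<Rightarrow> bool" where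
  "countable_sup_property L \<longleftrightarrow>
     (\<forall>S s. S \<subseteq> L \<and> S \<noteq> {} \<and> is_sup_in L S s \<longrightarrow>
        (\<exists>T \<subseteq> S. countable T \<and> is_sup_in L T s))"

definition cozero_set :: "'a topology \<Rightarrow> 'a set \<Rightarrow> bool" where
  "cozero_set X U \<longleftrightarrow> (\<exists>f. continuous_map X euclideanreal f \<and> U = {x \<in> topspace X. f x \<noteq> 0})"

definition ccc_cozero :: "'a topology \<Rightarrow> bool" where
  "ccc_cozero X \<longleftrightarrow>
     (\<forall>\<U>. (\<forall>U\<in>\<U>. cozero_set X U) \<and> pairwise disjnt \<U> \<longrightarrow> countable \<U>)"

end

theory Submission
  imports Defs
begin

text \<open>Given S with supremum s in C(X) or C_b(X), the supremum is detected locally: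
  s = sup S exactly when, on every nonempty cozero set W and for every c > 0, some
  f \<in> S comes within c of s at a point of W. For fixed c, a maximal disjoint family
  of cozero sets on which a single f \<in> S is c-close to s is countable under CCC, and the
  chosen members of S over all c = 1/(n+1) form a countable subset with the same
  supremum. Conversely, for a disjoint family \<U> of cozero sets, the functions bounded
  by 1 that are supported in one member of \<U> or vanish on \<Union>\<U> have supremum 1; a
  countable subfamily with supremum 1 must meet every nonempty member of \<U>, which
  makes \<U> countable.\<close>

lemma Cfun_continuous_map: "f \<in> Cfun X \<Longrightarrow> continuous_map X euclideanreal f"
  by (simp add: Cfun_def)

lemma Cfun_outside_topspace: "f \<in> Cfun X \<Longrightarrow> x \<notin> topspace X \<Longrightarrow> f x = 0"
  by (simp add: Cfun_def)

lemma Cbfun_subset_Cfun: "Cbfun X \<subseteq> Cfun X"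
  by (auto simp: Cbfun_def)

lemma restrict_topspace_in_Cfun:
  assumes "continuous_map X euclideanreal f"
  shows "(\<lambda>x. if x \<in> topspace X then f x else 0) \<in> Cfun X"
  unfolding Cfun_def using continuous_map_eq[OF assms] by auto

lemma restrict_topspace_in_Cbfun:
  assumes "continuous_map X euclideanreal f" "\<And>x. x \<in> topspace X \<Longrightarrow> \<bar>f x\<bar> \<le> B"
  shows "(\<lambda>x. if x \<in> topspace X then f x else 0) \<in> Cbfun X"
  unfolding Cbfun_def using restrict_topspace_in_Cfun[OF assms(1)] assms(2) by auto

lemma cozero_set_subset_topspace: "cozero_set X W \<Longrightarrow> W \<subseteq> topspace X"
  by (auto simp: cozero_set_def)

lemma cozero_set_less:
  assumes "continuous_map X euclideanreal f" "continuous_map X euclideanreal g"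
  shows "cozero_set X {x \<in> topspace X. f x < g x}"
proof -
  have "continuous_map X euclideanreal (\<lambda>x. max (g x - f x) 0)"
    using assms by (intro continuous_intros)
  moreover have "{x \<in> topspace X. f x < g x} = {x \<in> topspace X. max (g x - f x) 0 \<noteq> 0}"
    by auto
  ultimately show ?thesis unfolding cozero_set_def by blast
qed

lemma cozero_set_Int:
  assumes "cozero_set X U" "cozero_set X V"
  shows "cozero_set X (U \<inter> V)"
proof -
  obtain f g where f: "continuous_map X euclideanreal f" "U = {x \<in> topspace X. f x \<noteq> 0}"
    and g: "continuous_map X euclideanreal g" "V = {x \<in> topspace X. g x \<noteq> 0}"
    using assms unfolding cozero_set_def by blast
  have "continuous_map X euclideanreal (\<lambda>x. f x * g x)"
    using f g by (intro continuous_intros)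
  moreover have "U \<inter> V = {x \<in> topspace X. f x * g x \<noteq> 0}"
    using f g by auto
  ultimately show ?thesis unfolding cozero_set_def by blast
qed

lemma cozero_set_bump:
  assumes "cozero_set X V" "x0 \<in> V"
  obtains g where "g \<in> Cbfun X" "\<And>x. g x \<le> 1" "g x0 = 1" "\<And>x. g x \<noteq> 0 \<Longrightarrow> x \<in> V"
proof -
  obtain v where v: "continuous_map X euclideanreal v" "V = {x \<in> topspace X. v x \<noteq> 0}"
    using assms(1) unfolding cozero_set_def by blast
  have x0: "x0 \<in> topspace X" "v x0 \<noteq> 0" using assms(2) v(2) by auto
  define g where "g = (\<lambda>x. if x \<in> topspace X then min (\<bar>v x\<bar> / \<bar>v x0\<bar>) 1 else 0)"
  have "continuous_map X euclideanreal (\<lambda>x. min (\<bar>v x\<bar> / \<bar>v x0\<bar>) 1)"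
    using v(1) by (intro continuous_intros) (use x0 in auto)
  then have "g \<in> Cbfun X"
    unfolding g_def by (rule restrict_topspace_in_Cbfun[where B = 1]) auto
  moreover have "g x \<noteq> 0 \<Longrightarrow> x \<in> V" for x
    using v(2) by (auto simp: g_def split: if_splits)
  ultimately show thesis
    using that x0 by (auto simp: g_def)
qed

text \<open>Both C(X) and C_b(X) are admissible; these closure properties are all that the
  local description of suprema below uses.\<close>
definition admissible_space :: "'a topology \<Rightarrow> ('a \<Rightarrow> real) set \<Rightarrow> bool" where
  "admissible_space X L \<longleftrightarrow> Cbfun X \<subseteq> L \<and> L \<subseteq> Cfun X \<and>
     (\<forall>s\<in>L. \<forall>w c. continuous_map X euclideanreal w \<longrightarrow> c > 0 \<longrightarrow>
        (\<lambda>x. if x \<in> topspace X then s x - min \<bar>w x\<bar> c else 0) \<in> L)"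

definition approximates_on_cozero :: "'a topology \<Rightarrow> ('a \<Rightarrow> real) set \<Rightarrow> ('a \<Rightarrow> real) \<Rightarrow> bool" where
  "approximates_on_cozero X S s \<longleftrightarrow>
     (\<forall>W c. cozero_set X W \<and> W \<noteq> {} \<and> c > 0 \<longrightarrow> (\<exists>f\<in>S. \<exists>x\<in>W. s x - f x < c))"

lemma admissible_space_Cfun: "admissible_space X (Cfun X)"
  unfolding admissible_space_def
proof (intro conjI ballI allI impI)
  fix s w and c :: real
  assume "s \<in> Cfun X" "continuous_map X euclideanreal w"
  then show "(\<lambda>x. if x \<in> topspace X then s x - min \<bar>w x\<bar> c else 0) \<in> Cfun X"
    by (intro restrict_topspace_in_Cfun continuous_intros) (auto dest: Cfun_continuous_map)
qed (use Cbfun_subset_Cfun in auto)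

lemma admissible_space_Cbfun: "admissible_space X (Cbfun X)"
  unfolding admissible_space_def
proof (intro conjI ballI allI impI)
  fix s w and c :: real
  assume s: "s \<in> Cbfun X" and w: "continuous_map X euclideanreal w" and c: "c > 0"
  then obtain B where B: "\<forall>x\<in>topspace X. \<bar>s x\<bar> \<le> B" "s \<in> Cfun X"
    by (auto simp: Cbfun_def)
  have "\<bar>s x - min (\<bar>w x\<bar>) c\<bar> \<le> B + c" if "x \<in> topspace X" for x
    using B(1) that c by (auto simp: abs_if min_def split: if_splits)
  then show "(\<lambda>x. if x \<in> topspace X then s x - min \<bar>w x\<bar> c else 0) \<in> Cbfun X"
    using B(2) w by (intro restrict_topspace_in_Cbfun continuous_intros) (auto dest: Cfun_continuous_map)
qed (use Cbfun_subset_Cfun in auto)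

lemma approximates_on_cozero_if_is_sup_in:
  assumes L: "admissible_space X L" and S: "S \<subseteq> L" and sup: "is_sup_in L S s"
  shows "approximates_on_cozero X S s"
  unfolding approximates_on_cozero_def
proof (intro allI impI, rule ccontr)
  fix W and c :: real
  assume W: "cozero_set X W \<and> W \<noteq> {} \<and> 0 < c" and far: "\<not> (\<exists>f\<in>S. \<exists>x\<in>W. s x - f x < c)"
  obtain w where w: "continuous_map X euclideanreal w" "W = {x \<in> topspace X. w x \<noteq> 0}"
    using W unfolding cozero_set_def by blast
  have sL: "s \<in> L" and ub: "\<forall>f\<in>S. f \<le> s" using sup by (auto simp: is_sup_in_def)
  text \<open>Lowering s by up to c on W yields a smaller upper bound of S.\<close>
  define u where "u = (\<lambda>x. if x \<in> topspace X then s x - min \<bar>w x\<bar> c else 0)"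
  have "u \<in> L" using L sL w W unfolding admissible_space_def u_def by blast
  moreover have "f \<le> u" if f: "f \<in> S" for f
  proof (rule le_funI)
    fix x
    have "f \<in> Cfun X" using f S L by (auto simp: admissible_space_def)
    moreover have "f x \<le> s x" using ub f by (auto simp: le_fun_def)
    moreover have "x \<in> W \<Longrightarrow> s x - f x \<ge> c" using f far by force
    ultimately show "f x \<le> u x"
      using w(2) by (cases "w x = 0") (auto simp: u_def Cfun_outside_topspace)
  qed
  ultimately have "s \<le> u" using sup unfolding is_sup_in_def by blast
  moreover obtain x where "x \<in> W" using W by auto
  ultimately show False using w W by (auto simp: u_def le_fun_def dest!: spec[of _ x])
qed

lemma is_sup_in_if_approximates_on_cozero:
  assumes L: "admissible_space X L" and sL: "s \<in> L" and ub: "\<forall>f\<in>S. f \<le> s"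
    and approx: "approximates_on_cozero X S s"
  shows "is_sup_in L S s"
  unfolding is_sup_in_def
proof (intro conjI sL ub ballI impI le_funI, rule ccontr)
  fix u x0 assume uL: "u \<in> L" and uub: "\<forall>f\<in>S. f \<le> u" and "\<not> s x0 \<le> u x0"
  then have x0: "u x0 < s x0" by simp
  have u: "u \<in> Cfun X" and s: "s \<in> Cfun X" using uL sL L by (auto simp: admissible_space_def)
  define d where "d = s x0 - u x0"
  have d: "d > 0" using x0 by (simp add: d_def)
  define W where "W = {x \<in> topspace X. u x + d/2 < s x}"
  have "cozero_set X W" unfolding W_def
    using u s by (intro cozero_set_less continuous_intros) (auto dest: Cfun_continuous_map)
  moreover have "x0 \<in> topspace X"
    using x0 Cfun_outside_topspace[OF u] Cfun_outside_topspace[OF s] by (metis less_irrefl)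
  then have "x0 \<in> W"
    using x0 by (auto simp: W_def d_def field_simps)
  ultimately obtain f x where f: "f \<in> S" "x \<in> W" "s x - f x < d/2"
    using approx d unfolding approximates_on_cozero_def by (metis empty_iff half_gt_zero)
  then have "u x < f x" by (auto simp: W_def)
  moreover have "f x \<le> u x" using uub f(1) by (auto simp: le_fun_def)
  ultimately show False by simp
qed

lemma maximal_disjoint_subfamily:
  fixes Q :: "'a set set"
  obtains M where "M \<subseteq> Q" "pairwise disjnt M" "\<And>V. V \<in> Q \<Longrightarrow> V \<noteq> {} \<Longrightarrow> \<exists>U\<in>M. U \<inter> V \<noteq> {}"
proof -
  define A where "A = {M. M \<subseteq> Q \<and> pairwise disjnt M}"
  have "\<Union>C \<in> A" if "C \<in> chains A" for C
    using that pairwise_chain_Union[of C disjnt] by (auto simp: A_def chains_def)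
  then obtain M where M: "M \<in> A" and max: "\<forall>N\<in>A. M \<subseteq> N \<longrightarrow> N = M"
    using Zorn_Lemma by blast
  have "\<exists>U\<in>M. U \<inter> V \<noteq> {}" if V: "V \<in> Q" "V \<noteq> {}" for V
  proof (rule ccontr)
    assume apart: "\<not> (\<exists>U\<in>M. U \<inter> V \<noteq> {})"
    then have "insert V M \<in> A"
      using M V unfolding A_def pairwise_def disjnt_def by auto
    then have "V \<in> M" using max by auto
    then show False using apart V by auto
  qed
  then show thesis using that M by (auto simp: A_def)
qed

lemma countable_approximants:
  assumes ccc: "ccc_cozero X" and S: "S \<subseteq> Cfun X" and s: "s \<in> Cfun X"
    and approx: "approximates_on_cozero X S s" and c: "c > 0"
  obtains T where "T \<subseteq> S" "countable T"
    "\<And>W. cozero_set X W \<Longrightarrow> W \<noteq> {} \<Longrightarrow> \<exists>f\<in>T. \<exists>x\<in>W. s x - f x < c"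
proof -
  define Q where "Q = {V. cozero_set X V \<and> (\<exists>h\<in>S. \<forall>x\<in>V. s x - h x < c)}"
  obtain M where M: "M \<subseteq> Q" "pairwise disjnt M"
    and meets: "\<And>V. V \<in> Q \<Longrightarrow> V \<noteq> {} \<Longrightarrow> \<exists>U\<in>M. U \<inter> V \<noteq> {}"
    using maximal_disjoint_subfamily[of Q] by blast
  have "countable M" using ccc M unfolding ccc_cozero_def Q_def by blast
  have "\<forall>V\<in>M. \<exists>h. h \<in> S \<and> (\<forall>x\<in>V. s x - h x < c)"
    using M(1) unfolding Q_def by blast
  then obtain H where H: "\<And>V. V \<in> M \<Longrightarrow> H V \<in> S \<and> (\<forall>x\<in>V. s x - H V x < c)"
    by (auto dest!: bchoice)
  show thesis
  proof (rule that[of "H ` M"])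
    show "H ` M \<subseteq> S" using H by auto
    show "countable (H ` M)" using \<open>countable M\<close> by simp
  next
    fix W assume W: "cozero_set X W" "W \<noteq> {}"
    obtain h x where h: "h \<in> S" "x \<in> W" "s x - h x < c"
      using approx W c unfolding approximates_on_cozero_def by blast
    define V where "V = W \<inter> {x \<in> topspace X. s x < c + h x}"
    have "cozero_set X {x \<in> topspace X. s x < c + h x}"
      using s h(1) S by (intro cozero_set_less continuous_intros) (auto dest: Cfun_continuous_map)
    then have "cozero_set X V" unfolding V_def using W cozero_set_Int by blast
    moreover have "x \<in> V" using h W cozero_set_subset_topspace by (auto simp: V_def)
    moreover have "\<forall>y\<in>V. s y - h y < c" by (auto simp: V_def)
    ultimately have "V \<in> Q" "V \<noteq> {}" using h(1) unfolding Q_def by auto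
    then obtain U y where "U \<in> M" "y \<in> U" "y \<in> V" using meets by blast
    then show "\<exists>f\<in>H ` M. \<exists>x\<in>W. s x - f x < c" using H by (auto simp: V_def)
  qed
qed

lemma countable_sup_property_if_ccc_cozero:
  assumes L: "admissible_space X L" and ccc: "ccc_cozero X"
  shows "countable_sup_property L"
  unfolding countable_sup_property_def
proof (intro allI impI)
  fix S s assume "S \<subseteq> L \<and> S \<noteq> {} \<and> is_sup_in L S s"
  then have S: "S \<subseteq> L" and sup: "is_sup_in L S s" by auto
  have sL: "s \<in> L" and ub: "\<forall>f\<in>S. f \<le> s" using sup by (auto simp: is_sup_in_def)
  have SC: "S \<subseteq> Cfun X" and sC: "s \<in> Cfun X"
    using S sL L by (auto simp: admissible_space_def)
  have approx: "approximates_on_cozero X S s"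
    using approximates_on_cozero_if_is_sup_in[OF L S sup] .
  have "\<exists>T. T \<subseteq> S \<and> countable T \<and> (\<forall>W. cozero_set X W \<and> W \<noteq> {} \<longrightarrow>
      (\<exists>f\<in>T. \<exists>x\<in>W. s x - f x < inverse (real (Suc n))))" for n
    by (rule countable_approximants[OF ccc SC sC approx, where c = "inverse (real (Suc n))"])
      (simp, blast)
  then obtain T where T: "\<And>n. T n \<subseteq> S" "\<And>n. countable (T n)"
    "\<And>n W. cozero_set X W \<Longrightarrow> W \<noteq> {} \<Longrightarrow> \<exists>f\<in>T n. \<exists>x\<in>W. s x - f x < inverse (real (Suc n))"
    by metis
  have "approximates_on_cozero X (\<Union>n. T n) s"
    unfolding approximates_on_cozero_def
  proof (intro allI impI)
    fix W and c :: real assume W: "cozero_set X W \<and> W \<noteq> {} \<and> 0 < c"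
    obtain n where "inverse (real (Suc n)) < c" using reals_Archimedean W by blast
    then show "\<exists>f\<in>\<Union>n. T n. \<exists>x\<in>W. s x - f x < c" using T(3)[of W n] W by force
  qed
  then have "is_sup_in L (\<Union>n. T n) s"
    using is_sup_in_if_approximates_on_cozero[OF L sL] ub T(1) by blast
  moreover have "(\<Union>n. T n) \<subseteq> S" "countable (\<Union>n. T n)" using T(1,2) by auto
  ultimately show "\<exists>T\<subseteq>S. countable T \<and> is_sup_in L T s" by blast
qed

lemma countable_disjoint_family_if_detected:
  fixes \<U> :: "'a set set" and P :: "'b \<Rightarrow> 'a set"
  assumes disj: "pairwise disjnt \<U>" and T: "countable T"
    and detect: "\<And>U. U \<in> \<U> \<Longrightarrow> U \<noteq> {} \<Longrightarrow> \<exists>t\<in>T. P t \<inter> U \<noteq> {} \<and> (\<exists>V\<in>\<U>. P t \<subseteq> V)"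
  shows "countable \<U>"
proof -
  define G where "G t = (SOME V. V \<in> \<U> \<and> P t \<subseteq> V)" for t
  have "U \<in> G ` T" if U: "U \<in> \<U>" "U \<noteq> {}" for U
  proof -
    obtain t where t: "t \<in> T" "P t \<inter> U \<noteq> {}" "\<exists>V\<in>\<U>. P t \<subseteq> V"
      using detect[OF U] by blast
    then have "G t \<in> \<U>" "P t \<subseteq> G t"
      unfolding G_def by (metis (mono_tags, lifting) someI_ex)+
    then have "G t = U"
      using disj U(1) t(2) unfolding pairwise_def disjnt_def by blast
    then show ?thesis using t(1) by blast
  qed
  then have "\<U> \<subseteq> insert {} (G ` T)" by blast
  then show ?thesis using T by (metis countable_image countable_insert countable_subset)
qed

lemma approximates_on_cozero_subordinate_bumps:
  assumes coz: "\<And>U. U \<in> \<U> \<Longrightarrow> cozero_set X U"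
  shows "approximates_on_cozero X
    {g \<in> Cbfun X. (\<forall>x. g x \<le> 1) \<and> ((\<exists>U\<in>\<U>. \<forall>x. g x \<noteq> 0 \<longrightarrow> x \<in> U) \<or> (\<forall>x\<in>\<Union>\<U>. g x = 0))}
    (\<lambda>x. if x \<in> topspace X then 1 else 0)" (is "approximates_on_cozero X ?S ?one")
  unfolding approximates_on_cozero_def
proof (intro allI impI)
  fix W and c :: real assume W: "cozero_set X W \<and> W \<noteq> {} \<and> 0 < c"
  text \<open>A bump at x0 supported in a member of \<U>, or in W if W misses \<Union>\<U>.\<close>
  obtain x0 V where x0: "x0 \<in> W" and V: "cozero_set X V" "x0 \<in> V"
    and VS: "(\<exists>U\<in>\<U>. V \<subseteq> U) \<or> V \<inter> \<Union>\<U> = {}"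
  proof (cases "W \<inter> \<Union>\<U> = {}")
    case True
    obtain x0 where "x0 \<in> W" using W by auto
    show thesis by (rule that[of x0 W]) (use \<open>x0 \<in> W\<close> W True in auto)
  next
    case False
    then obtain x0 U where "x0 \<in> W" "U \<in> \<U>" "x0 \<in> U" by blast
    then show thesis by (intro that[of x0 U] coz) auto
  qed
  obtain g where g: "g \<in> Cbfun X" "\<And>x. g x \<le> 1" "g x0 = 1" "\<And>x. g x \<noteq> 0 \<Longrightarrow> x \<in> V"
    using cozero_set_bump[OF V] by blast
  have "g \<in> ?S" using g VS by blast
  moreover have "?one x0 - g x0 < c"
    using g(3) x0 W cozero_set_subset_topspace by auto
  ultimately show "\<exists>f\<in>?S. \<exists>x\<in>W. ?one x - f x < c"
    using x0 by blast
qed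

lemma ccc_cozero_if_countable_sup_property:
  assumes L: "admissible_space X L" and csp: "countable_sup_property L"
  shows "ccc_cozero X"
  unfolding ccc_cozero_def
proof (intro allI impI)
  fix \<U> assume "(\<forall>U\<in>\<U>. cozero_set X U) \<and> pairwise disjnt \<U>"
  then have coz: "\<And>U. U \<in> \<U> \<Longrightarrow> cozero_set X U" and disj: "pairwise disjnt \<U>" by auto
  have BL: "Cbfun X \<subseteq> L" using L by (simp add: admissible_space_def)
  define one where "one = (\<lambda>x. if x \<in> topspace X then (1::real) else 0)"
  have oneL: "one \<in> L" unfolding one_def
    by (intro subsetD[OF BL] restrict_topspace_in_Cbfun[of _ _ 1]) auto
  define S where "S = {g \<in> Cbfun X. (\<forall>x. g x \<le> 1) \<and>
      ((\<exists>U\<in>\<U>. \<forall>x. g x \<noteq> 0 \<longrightarrow> x \<in> U) \<or> (\<forall>x\<in>\<Union>\<U>. g x = 0))}"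
  have SL: "S \<subseteq> L" using BL by (auto simp: S_def)
  have "(\<lambda>x. 0) \<in> S" unfolding S_def Cbfun_def Cfun_def by auto
  have ub: "\<forall>f\<in>S. f \<le> one"
  proof
    fix f assume f: "f \<in> S"
    then have "f \<in> Cfun X" using Cbfun_subset_Cfun by (auto simp: S_def)
    then show "f \<le> one" using f by (auto simp: le_fun_def one_def S_def Cfun_outside_topspace)
  qed
  have "is_sup_in L S one"
    using is_sup_in_if_approximates_on_cozero[OF L oneL ub]
      approximates_on_cozero_subordinate_bumps[OF coz] unfolding S_def one_def by blast
  then obtain T where T: "T \<subseteq> S" "countable T" "is_sup_in L T one"
    using csp SL \<open>(\<lambda>x. 0) \<in> S\<close> unfolding countable_sup_property_def by blast
  have approxT: "approximates_on_cozero X T one"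
    using approximates_on_cozero_if_is_sup_in[OF L _ T(3)] T(1) SL by blast
  show "countable \<U>"
  proof (rule countable_disjoint_family_if_detected[OF disj T(2), of "\<lambda>t. {x. t x \<noteq> 0}"])
    fix U assume U: "U \<in> \<U>" "U \<noteq> {}"
    obtain t x where t: "t \<in> T" "x \<in> U" "one x - t x < 1"
      using approxT coz[OF U(1)] U(2) unfolding approximates_on_cozero_def
      by (metis zero_less_one)
    then have "t x \<noteq> 0"
      using cozero_set_subset_topspace[OF coz[OF U(1)]] by (auto simp: one_def)
    moreover have "t \<in> S" using t(1) T(1) by blast
    ultimately have "\<exists>V\<in>\<U>. {x. t x \<noteq> 0} \<subseteq> V" using t(2) U(1) by (auto simp: S_def)
    then show "\<exists>t\<in>T. {x. t x \<noteq> 0} \<inter> U \<noteq> {} \<and> (\<exists>V\<in>\<U>. {x. t x \<noteq> 0} \<subseteq> V)"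
      using t(1,2) \<open>t x \<noteq> 0\<close> by blast
  qed
qed

theorem proposition4p7:
  fixes X :: "'a topology"
  shows "(countable_sup_property (Cfun X) \<longleftrightarrow> countable_sup_property (Cbfun X)) \<and>
         (countable_sup_property (Cbfun X) \<longleftrightarrow> ccc_cozero X)"
  using countable_sup_property_if_ccc_cozero[OF admissible_space_Cfun]
    countable_sup_property_if_ccc_cozero[OF admissible_space_Cbfun]
    ccc_cozero_if_countable_sup_property[OF admissible_space_Cfun]
    ccc_cozero_if_countable_sup_property[OF admissible_space_Cbfun]
  by blast

end
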